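(* Let $m\ge 2$ and let $a_1,a_2,b_1,\dots,b_m,c_1,\dots,c_m\in\mathbb{C}$ satisfy $a_1\ne a_2$, $b_i\ne b_j$ and $c_i\ne c_j$ for $i\ne j$, and $a_1+(m-1)a_2=\sum_{i=1}^m(b_i+c_i)$. Define $m\times m$ complex matrices ${\bf B},{\bf C}$ by $$B_{ij}=\begin{cases}b_i+c_{m+1-i}-a_2 & i<j\\ b_i & i=j\\ 0 & i>j\end{cases},\qquad C_{ij}=\begin{cases}0 & i<j\\ c_{m+1-i} & i=j\\ b_i+c_{m+1-i}-a_2 & i>j\end{cases}.$$ Then ${\bf A}={\bf B}+{\bf C}$ is diagonalizable and its eigenvalues, with multiplicity, are $a_1$ (once) and $a_2$ (with multiplicity $m-1$).
   Context: All matrices act on $V=\mathbb{C}^m$ with its standard basis. *)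

theory Defs
  imports "Jordan_Normal_Form.Matrix" "Jordan_Normal_Form.Char_Poly"
begin

text \<open>Entries are indexed 1..m in the paper; Isabelle matrices are 0-indexed, so
  paper entry (i,j) is entry (i-1,j-1) here. The vectors b, c are indexed 1..m.\<close>

definition matB :: "nat \<Rightarrow> complex \<Rightarrow> (nat \<Rightarrow> complex) \<Rightarrow> (nat \<Rightarrow> complex) \<Rightarrow> complex mat" where
  "matB m a2 b c = mat m m (\<lambda>(i, j).
      if i < j then b (i+1) + c (m - i) - a2
      else if i = j then b (i+1) else 0)"

definition matC :: "nat \<Rightarrow> complex \<Rightarrow> (nat \<Rightarrow> complex) \<Rightarrow> (nat \<Rightarrow> complex) \<Rightarrow> complex mat" where
  "matC m a2 b c = mat m m (\<lambda>(i, j).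
      if i < j then 0
      else if i = j then c (m - i) else b (i+1) + c (m - i) - a2)"

definition diagonalizable :: "'a::semiring_1 mat \<Rightarrow> bool" where
  "diagonalizable A \<longleftrightarrow> (\<exists>D. diagonal_mat D \<and> similar_mat A D)"

end

theory Submission
  imports Defs
begin

text \<open>Off the diagonal, row i of B + C is constant, equal to d_i = b_i + c_(m+1-i) - a_2,
  and its diagonal entry is a_2 + d_i. Hence B + C = a_2 I + d 1^T, and the hypothesis on the
  sums says 1^T d = a_1 - a_2, which is nonzero. So d is an eigenvector for the eigenvalue
  a_2 + 1^T d = a_1, and the m - 1 independent vectors e_1 - e_k (k > 1) spanning the
  hyperplane 1^T x = 0 are eigenvectors for a_2; together they form an eigenbasis.\<close>

lemma const_cols_mat_mult:
  fixes d :: "nat \<Rightarrow> 'a :: comm_semiring_0"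
  assumes "M \<in> carrier_mat n p"
  shows "mat n n (\<lambda>(i, j). d i) * M = mat n p (\<lambda>(i, k). d i * (\<Sum>l<n. M $$ (l, k)))"
  using assms by (intro eq_matI) (auto simp: scalar_prod_def sum_distrib_left lessThan_atLeast0)

lemma diag_plus_rank_one_mult:
  fixes d :: "nat \<Rightarrow> 'a :: comm_semiring_1"
  assumes "M \<in> carrier_mat n p"
  shows "(mat_diag n f + mat n n (\<lambda>(i, j). d i)) * M
       = mat n p (\<lambda>(i, k). f i * M $$ (i, k) + d i * (\<Sum>l<n. M $$ (l, k)))"
  using assms
  by (simp add: add_mult_distrib_mat[of _ n n] mat_diag_mult_left const_cols_mat_mult)
     (rule eq_matI; simp)

definition rank_one_eigenbasis :: "nat \<Rightarrow> (nat \<Rightarrow> 'a :: ring_1) \<Rightarrow> 'a mat" where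
  "rank_one_eigenbasis n d =
     mat n n (\<lambda>(l, k). if k = 0 then d l else (if l = 0 then 1 else 0) - (if l = k then 1 else 0))"

lemma rank_one_eigenbasis_carrier: "rank_one_eigenbasis n d \<in> carrier_mat n n"
  by (simp add: rank_one_eigenbasis_def)

lemma index_rank_one_eigenbasis:
  "l < n \<Longrightarrow> k < n \<Longrightarrow> rank_one_eigenbasis n d $$ (l, k)
     = (if k = 0 then d l else (if l = 0 then 1 else 0) - (if l = k then 1 else 0))"
  by (simp add: rank_one_eigenbasis_def)

lemma sum_col_rank_one_eigenbasis:
  assumes "k < n"
  shows "(\<Sum>l<n. rank_one_eigenbasis n d $$ (l, k)) = (if k = 0 then sum d {..<n} else 0)"
proof -
  have "(\<Sum>l<n. rank_one_eigenbasis n d $$ (l, k))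
      = (\<Sum>l<n. if k = 0 then d l else (if l = 0 then 1 else 0) - (if l = k then 1 else 0))"
    by (rule sum.cong) (simp_all add: assms index_rank_one_eigenbasis)
  then show ?thesis
    using assms by (simp add: sum_subtractf)
qed

lemma rank_one_eigenbasis_left_inverse:
  fixes d :: "nat \<Rightarrow> 'a :: field"
  assumes "sum d {..<n} \<noteq> 0"
  shows "(mat_diag n (\<lambda>i. if i = 0 then 0 else -1)
          + mat n n (\<lambda>(i, j). (if i = 0 then 1 else d i) / sum d {..<n}))
         * rank_one_eigenbasis n d = 1\<^sub>m n"
  unfolding diag_plus_rank_one_mult[OF rank_one_eigenbasis_carrier]
  by (rule eq_matI)
    (simp_all add: sum_col_rank_one_eigenbasis,
      use assms in \<open>auto simp: index_rank_one_eigenbasis\<close>)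

lemma rank_one_eigenbasis_diagonalizes:
  fixes d :: "nat \<Rightarrow> 'a :: comm_ring_1"
  shows "(mat_diag n (\<lambda>_. a) + mat n n (\<lambda>(i, j). d i)) * rank_one_eigenbasis n d
       = rank_one_eigenbasis n d * mat_diag n (\<lambda>k. if k = 0 then a + sum d {..<n} else a)"
  unfolding diag_plus_rank_one_mult[OF rank_one_eigenbasis_carrier]
  by (subst mat_diag_mult_right[OF rank_one_eigenbasis_carrier], rule eq_matI)
    (simp_all add: sum_col_rank_one_eigenbasis,
      simp_all add: index_rank_one_eigenbasis ring_distribs mult.commute)

lemma similar_mat_of_eigenbasis:
  fixes A :: "'a :: field mat"
  assumes A: "A \<in> carrier_mat n n" and D: "D \<in> carrier_mat n n"
    and P: "P \<in> carrier_mat n n" and Q: "Q \<in> carrier_mat n n"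
    and left_inverse: "Q * P = 1\<^sub>m n" and eigen: "A * P = P * D"
  shows "similar_mat A D"
proof -
  have right_inverse: "P * Q = 1\<^sub>m n"
    by (rule mat_mult_left_right_inverse[OF Q P left_inverse])
  have "A = A * (P * Q)"
    using A by (simp add: right_inverse)
  also have "\<dots> = P * D * Q"
    using A P Q by (simp add: assoc_mult_mat[symmetric] eigen)
  finally show ?thesis
    using A D P Q by (intro similar_matI[OF _ right_inverse left_inverse]) auto
qed

lemma similar_mat_diag_plus_rank_one:
  fixes d :: "nat \<Rightarrow> 'a :: field"
  assumes "sum d {..<n} \<noteq> 0"
  shows "similar_mat (mat_diag n (\<lambda>_. a) + mat n n (\<lambda>(i, j). d i))
           (mat_diag n (\<lambda>k. if k = 0 then a + sum d {..<n} else a))"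
  by (rule similar_mat_of_eigenbasis[OF _ _ rank_one_eigenbasis_carrier _
        rank_one_eigenbasis_left_inverse[OF assms] rank_one_eigenbasis_diagonalizes]) auto

lemma char_poly_mat_diag:
  "char_poly (mat_diag n f) = (\<Prod>i\<leftarrow>[0..<n]. [:- f i, 1:])"
proof -
  have "upper_triangular (mat_diag n f)"
    by (simp add: upper_triangular_def mat_diag_def)
  moreover have "diag_mat (mat_diag n f) = map f [0..<n]"
    by (simp add: diag_mat_def mat_diag_def)
  ultimately show ?thesis
    by (simp add: char_poly_upper_triangular[OF mat_diag_dim] comp_def)
qed

lemma char_poly_mat_diag_one_simple:
  assumes "0 < n"
  shows "char_poly (mat_diag n (\<lambda>k. if k = 0 then x else y)) = [:- x, 1:] * [:- y, 1:] ^ (n - 1)"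
proof -
  have "map (\<lambda>k. [:- (if k = 0 then x else y), 1:]) [1..<n] = map (\<lambda>_. [:- y, 1:]) [1..<n]"
    by (rule map_cong) auto
  then have "map (\<lambda>k. [:- (if k = 0 then x else y), 1:]) [1..<n] = replicate (n - 1) [:- y, 1:]"
    by (simp add: map_replicate_const)
  then show ?thesis
    using assms by (simp add: char_poly_mat_diag upt_conv_Cons)
qed

lemma sum_Suc_plus_reflect:
  fixes f g :: "nat \<Rightarrow> 'a :: comm_monoid_add"
  shows "(\<Sum>l<m. f (Suc l) + g (m - l)) = (\<Sum>i=1..m. f i + g i)"
proof -
  have "(\<Sum>l<m. g (m - l)) = (\<Sum>i=Suc 0..m. g (m - (m - i)))"
    using sum.atLeastLessThan_rev_at_least_Suc_atMost[of "\<lambda>l. g (m - l)" 0 m]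
    by (simp add: lessThan_atLeast0)
  also have "\<dots> = (\<Sum>i=1..m. g i)"
    by (rule sum.cong) auto
  finally show ?thesis
    by (simp add: sum.distrib sum.atLeast1_atMost_eq)
qed

lemma matB_plus_matC:
  "matB m a2 b c + matC m a2 b c
     = mat_diag m (\<lambda>_. a2) + mat m m (\<lambda>(i, j). b (Suc i) + c (m - i) - a2)"
  by (rule eq_matI) (auto simp: matB_def matC_def mat_diag_def)

theorem theorem2p2:
  fixes m :: nat and a1 a2 :: complex and b c :: "nat \<Rightarrow> complex"
  assumes "m \<ge> 2"
    and "a1 \<noteq> a2"
    and "inj_on b {1..m}"
    and "inj_on c {1..m}"
    and "a1 + of_nat (m - 1) * a2 = (\<Sum>i=1..m. b i + c i)"
  shows "diagonalizable (matB m a2 b c + matC m a2 b c)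
       \<and> char_poly (matB m a2 b c + matC m a2 b c) = [:-a1, 1:] * [:-a2, 1:] ^ (m - 1)"
proof -
  define d where "d i = b (Suc i) + c (m - i) - a2" for i
  have "sum d {..<m} = (\<Sum>i=1..m. b i + c i) - of_nat m * a2"
    by (simp add: d_def sum_subtractf sum_Suc_plus_reflect)
  also have "\<dots> = a1 - a2"
    using assms(1,5) by (simp add: algebra_simps)
  finally have sum_d: "sum d {..<m} = a1 - a2" .
  have nonzero: "sum d {..<m} \<noteq> 0" and eigenvalue: "a2 + sum d {..<m} = a1"
    using sum_d assms(2) by simp_all
  have "similar_mat (mat_diag m (\<lambda>_. a2) + mat m m (\<lambda>(i, j). d i))
      (mat_diag m (\<lambda>k. if k = 0 then a1 else a2))"
    using similar_mat_diag_plus_rank_one[OF nonzero, of a2] unfolding eigenvalue .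
  then have similar: "similar_mat (matB m a2 b c + matC m a2 b c)
      (mat_diag m (\<lambda>k. if k = 0 then a1 else a2))"
    unfolding matB_plus_matC d_def .
  have "char_poly (matB m a2 b c + matC m a2 b c)
      = char_poly (mat_diag m (\<lambda>k. if k = 0 then a1 else a2))"
    by (rule char_poly_similar[OF similar])
  also have "\<dots> = [:-a1, 1:] * [:-a2, 1:] ^ (m - 1)"
    using assms(1) by (intro char_poly_mat_diag_one_simple) simp
  finally have "char_poly (matB m a2 b c + matC m a2 b c) = [:-a1, 1:] * [:-a2, 1:] ^ (m - 1)" .
  moreover have "diagonal_mat (mat_diag m (\<lambda>k. if k = 0 then a1 else a2))"
    by (simp add: diagonal_mat_def mat_diag_def)
  then have "diagonalizable (matB m a2 b c + matC m a2 b c)"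
    using similar unfolding diagonalizable_def by blast
  ultimately show ?thesis by simp
qed

end
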